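(* Let $n\ge 1$, $\nu\ge 1$ be integers and $\delta\in\{0,1,2\}$. If $[a_1,a_2,\ldots,a_{2\nu+\delta}]$ is a vertex of the orthogonal graph $\mathcal{O}^{(2\nu+\delta)}_{2^n}$, then $a_i\in\mathbb{Z}_{2^n}^\times$ for some $i\in\{1,2,\ldots,2\nu\}$.
   Context: Let $V^{2\nu+\delta}$ be the set of tuples $\vec a=(a_1,\ldots,a_{2\nu+\delta})\in(\mathbb{Z}_{2^n})^{2\nu+\delta}$ such that some $a_i$ is a unit of $\mathbb{Z}_{2^n}$. Write $\vec a\sim\vec b$ if $\vec a=\lambda\vec b$ for some $\lambda\in\mathbb{Z}_{2^n}^\times$, let $[\vec a]=[a_1,\ldots,a_{2\nu+\delta}]$ denote the equivalence class and $V^{2\nu+\delta}_\sim$ the set of classes. Let $G_{2\nu+\delta,\Delta}$ be the $(2\nu+\delta)\times(2\nu+\delta)$ block-diagonal-type matrix over $\mathbb{Z}_{2^n}$ given by $\begin{pmatrix}0&I_\nu&\\ &0&\\ &&\Delta\end{pmatrix}$ (the first two block rows/columns of size $\nu$, all unspecified blocks zero), where $\Delta$ is empty if $\delta=0$, $\Delta=(1)$ if $\delta=1$, and $\Delta=\begin{pmatrix}z&1\\0&z\end{pmatrix}$ if $\delta=2$, with $z$ a fixed unit of $\mathbb{Z}_{2^n}$ (equivalently, $z\notin\{x^2+x:x\in\mathbb{Z}_{2^n}\}$). The orthogonal graph $\mathcal{O}^{(2\nu+\delta)}_{2^n}$ has vertex set $\{[\vec a]\in V^{2\nu+\delta}_\sim:\vec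 a\,G_{2\nu+\delta,\Delta}\,\vec a^t=0\}$, and $[\vec a]$ is adjacent to $[\vec b]$ iff $\vec a\,(G_{2\nu+\delta,\Delta}+G_{2\nu+\delta,\Delta}^t)\,\vec b^t\in\mathbb{Z}_{2^n}^\times$. *)

theory Defs
  imports Main
begin

text \<open>Elements of Z_(2^n) are represented by integers in {0..<2^n}.
  Tuples of length N are functions nat => int, indexed by 1..N, zero elsewhere.\<close>

definition unit_mod :: "int \<Rightarrow> int \<Rightarrow> bool" where
  "unit_mod m x \<longleftrightarrow> (\<exists>y. (x * y) mod m = 1 mod m)"

definition units_Z :: "nat \<Rightarrow> int set" where
  "units_Z n = {x \<in> {0..<2^n}. unit_mod (2^n) x}"

definition tuples :: "nat \<Rightarrow> nat \<Rightarrow> (nat \<Rightarrow> int) set" where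
  "tuples n N = {a. (\<forall>i\<in>{1..N}. a i \<in> {0..<2^n}) \<and> (\<forall>i. i \<notin> {1..N} \<longrightarrow> a i = 0)}"

definition Vset :: "nat \<Rightarrow> nat \<Rightarrow> (nat \<Rightarrow> int) set" where
  "Vset n N = {a \<in> tuples n N. \<exists>i\<in>{1..N}. a i \<in> units_Z n}"

definition scale :: "nat \<Rightarrow> int \<Rightarrow> (nat \<Rightarrow> int) \<Rightarrow> (nat \<Rightarrow> int)" where
  "scale n l a = (\<lambda>i. (l * a i) mod 2^n)"

definition cls :: "nat \<Rightarrow> nat \<Rightarrow> (nat \<Rightarrow> int) \<Rightarrow> (nat \<Rightarrow> int) set" where
  "cls n N a = {b \<in> Vset n N. \<exists>l\<in>units_Z n. a = scale n l b}"

definition Gmat :: "nat \<Rightarrow> nat \<Rightarrow> int \<Rightarrow> nat \<Rightarrow> nat \<Rightarrow> int" where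
  "Gmat \<nu> \<delta> z i j =
     (if 1 \<le> i \<and> i \<le> \<nu> \<and> j = i + \<nu> then 1
      else if \<delta> = 1 \<and> i = 2*\<nu>+1 \<and> j = 2*\<nu>+1 then 1
      else if \<delta> = 2 \<and> i = 2*\<nu>+1 \<and> j = 2*\<nu>+1 then z
      else if \<delta> = 2 \<and> i = 2*\<nu>+1 \<and> j = 2*\<nu>+2 then 1
      else if \<delta> = 2 \<and> i = 2*\<nu>+2 \<and> j = 2*\<nu>+2 then z
      else 0)"

definition bform :: "nat \<Rightarrow> nat \<Rightarrow> nat \<Rightarrow> int \<Rightarrow> (nat \<Rightarrow> int) \<Rightarrow> (nat \<Rightarrow> int) \<Rightarrow> int" where
  "bform n \<nu> \<delta> z a b =
     (\<Sum>i\<in>{1..2*\<nu>+\<delta>}. \<Sum>j\<in>{1..2*\<nu>+\<delta>}. a i * Gmat \<nu> \<delta> z i j * b j) mod 2^n"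

definition orth_vertices :: "nat \<Rightarrow> nat \<Rightarrow> nat \<Rightarrow> int \<Rightarrow> (nat \<Rightarrow> int) set set" where
  "orth_vertices n \<nu> \<delta> z =
     {cls n (2*\<nu>+\<delta>) a | a. a \<in> Vset n (2*\<nu>+\<delta>) \<and> bform n \<nu> \<delta> z a a = 0}"

end

theory Submission
  imports Defs
begin

text \<open>The units of Z_(2^n) are the odd residues, so it suffices to argue modulo 2.
  The vertex has a representative a' with a' G a'^t = 0, and a' is a multiple of a. If
  a_1, ..., a_(2 nu) were all even, so would be the same entries of a' and hence the hyperbolic
  part of the form. What remains is x^2 (delta = 1) or z x^2 + x y + z y^2 (delta = 2, z odd)
  in the last coordinates x, y of a', which is even only if x and y are even. Then every entry
  of a' would be even, although one of them is a unit.\<close>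

lemma even_mod_pow2_iff:
  fixes x :: int
  assumes "n \<ge> 1"
  shows "even (x mod 2^n) \<longleftrightarrow> even x"
proof -
  have "(2::int) dvd 2^n" using assms by (simp add: dvd_power)
  then show ?thesis by (rule dvd_mod_iff)
qed

lemma unit_mod_pow2_iff_odd:
  fixes x :: int
  assumes "n \<ge> 1"
  shows "unit_mod (2^n) x \<longleftrightarrow> odd x"
proof
  assume "unit_mod (2^n) x"
  then obtain y where y: "(x * y) mod 2^n = 1 mod 2^n" unfolding unit_mod_def by blast
  have "1 mod (2::int)^n = 1" using assms by (simp add: one_less_power)
  with y have "odd ((x * y) mod 2^n)" by simp
  then show "odd x" using assms by (simp add: even_mod_pow2_iff)
next
  assume "odd x"
  then have "gcd x (2^n) = 1" by simp
  then obtain u v where "u * x + v * 2^n = 1" using bezout_int[of x "2^n"] by auto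
  then have "(x * u) mod 2^n = 1 mod 2^n" by (metis mod_mult_self1 mult.commute)
  then show "unit_mod (2^n) x" unfolding unit_mod_def by blast
qed

lemma units_Z_imp_odd: "n \<ge> 1 \<Longrightarrow> x \<in> units_Z n \<Longrightarrow> odd x"
  by (simp add: units_Z_def unit_mod_pow2_iff_odd)

lemma Vset_has_odd_coordinate:
  assumes "n \<ge> 1" and "b \<in> Vset n N"
  obtains k where "k \<in> {1..N}" and "odd (b k)"
  using assms units_Z_imp_odd unfolding Vset_def by blast

lemma even_scale: "n \<ge> 1 \<Longrightarrow> even (b i) \<Longrightarrow> even (scale n l b i)"
  by (simp add: scale_def even_mod_pow2_iff)

lemma scale_one_tuples:
  assumes "b \<in> tuples n N"
  shows "scale n 1 b = b"
proof
  fix i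
  show "scale n 1 b i = b i"
    using assms by (cases "i \<in> {1..N}") (auto simp: tuples_def scale_def)
qed

lemma self_in_cls:
  assumes "n \<ge> 1" and "b \<in> Vset n N"
  shows "b \<in> cls n N b"
proof -
  have "(1::int) \<in> units_Z n"
    using assms(1) by (simp add: units_Z_def unit_mod_pow2_iff_odd one_less_power)
  moreover have "b = scale n 1 b" using assms(2) scale_one_tuples unfolding Vset_def by auto
  ultimately show ?thesis using assms(2) unfolding cls_def by blast
qed

lemma cls_eq_imp_scale:
  assumes "n \<ge> 1" and "b \<in> Vset n N" and "cls n N b = cls n N b'"
  obtains l where "b' = scale n l b"
  using self_in_cls[OF assms(1,2)] assms(3) unfolding cls_def by blast

definition anisotropic_form :: "nat \<Rightarrow> int \<Rightarrow> int \<Rightarrow> int \<Rightarrow> int" where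
  "anisotropic_form \<delta> z x y =
     (if \<delta> = 1 then x^2 else if \<delta> = 2 then z * x^2 + x * y + z * y^2 else 0)"

lemma Gmat_hyperbolic_row_sum:
  assumes "1 \<le> i" and "i \<le> \<nu>"
  shows "(\<Sum>j\<in>{1..2*\<nu>+\<delta>}. b i * Gmat \<nu> \<delta> z i j * b j) = b i * b (i+\<nu>)"
proof -
  have "(\<Sum>j\<in>{1..2*\<nu>+\<delta>}. b i * Gmat \<nu> \<delta> z i j * b j)
      = (\<Sum>j\<in>{1..2*\<nu>+\<delta>}. if j = i+\<nu> then b i * b j else 0)"
    using assms by (intro sum.cong) (auto simp: Gmat_def)
  also have "\<dots> = b i * b (i+\<nu>)" using assms by (simp add: sum.delta')
  finally show ?thesis .
qed

lemma Gmat_zero_row: "\<nu> < i \<Longrightarrow> i \<le> 2*\<nu> \<Longrightarrow> Gmat \<nu> \<delta> z i j = 0"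
  by (simp add: Gmat_def)

lemma Gmat_anisotropic_rows_sum:
  assumes "\<delta> \<le> 2"
  shows "(\<Sum>i\<in>{2*\<nu>+1..2*\<nu>+\<delta>}. \<Sum>j\<in>{1..2*\<nu>+\<delta>}. b i * Gmat \<nu> \<delta> z i j * b j)
       = anisotropic_form \<delta> z (b (2*\<nu>+1)) (b (2*\<nu>+2))"
proof -
  have lower_cols: "(\<Sum>j\<in>{1..2*\<nu>}. b i * Gmat \<nu> \<delta> z i j * b j) = 0" if "i > 2*\<nu>" for i
    using that by (intro sum.neutral) (auto simp: Gmat_def)
  consider "\<delta> = 0" | "\<delta> = 1" | "\<delta> = 2" using assms by linarith
  then show ?thesis
  proof cases
    case 1
    then show ?thesis by (simp add: anisotropic_form_def)
  next
    case 2
    have "{1..2*\<nu>+1} = insert (2*\<nu>+1) {1..2*\<nu>}" by auto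
    then show ?thesis using 2 lower_cols[of "2*\<nu>+1"]
      by (simp add: Gmat_def anisotropic_form_def power2_eq_square)
  next
    case 3
    have "{1..2*\<nu>+2} = insert (2*\<nu>+1) (insert (2*\<nu>+2) {1..2*\<nu>})" by auto
    moreover have "{2*\<nu>+1..2*\<nu>+2} = {2*\<nu>+1, 2*\<nu>+2}" by auto
    ultimately show ?thesis using 3 lower_cols[of "2*\<nu>+1"] lower_cols[of "2*\<nu>+2"]
      by (simp add: Gmat_def anisotropic_form_def power2_eq_square algebra_simps)
  qed
qed

lemma Gmat_quadratic_form:
  assumes "\<delta> \<le> 2"
  shows "(\<Sum>i\<in>{1..2*\<nu>+\<delta>}. \<Sum>j\<in>{1..2*\<nu>+\<delta>}. b i * Gmat \<nu> \<delta> z i j * b j)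
       = (\<Sum>i\<in>{1..\<nu>}. b i * b (i+\<nu>)) + anisotropic_form \<delta> z (b (2*\<nu>+1)) (b (2*\<nu>+2))"
proof -
  let ?row = "\<lambda>i. \<Sum>j\<in>{1..2*\<nu>+\<delta>}. b i * Gmat \<nu> \<delta> z i j * b j"
  have "{1..2*\<nu>+\<delta>} = {1..\<nu>} \<union> ({\<nu>+1..2*\<nu>} \<union> {2*\<nu>+1..2*\<nu>+\<delta>})" by auto
  then have "sum f {1..2*\<nu>+\<delta>}
      = sum f {1..\<nu>} + (sum f {\<nu>+1..2*\<nu>} + sum f {2*\<nu>+1..2*\<nu>+\<delta>})" for f :: "nat \<Rightarrow> int"
    by (simp; subst sum.union_disjoint; auto simp: sum.union_disjoint)
  then have "sum ?row {1..2*\<nu>+\<delta>}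
      = sum ?row {1..\<nu>} + (sum ?row {\<nu>+1..2*\<nu>} + sum ?row {2*\<nu>+1..2*\<nu>+\<delta>})" .
  also have "sum ?row {\<nu>+1..2*\<nu>} = 0" by (simp add: Gmat_zero_row)
  also have "sum ?row {1..\<nu>} = (\<Sum>i\<in>{1..\<nu>}. b i * b (i+\<nu>))"
    by (intro sum.cong refl Gmat_hyperbolic_row_sum) auto
  finally show ?thesis using Gmat_anisotropic_rows_sum[OF assms] by simp
qed

lemma even_anisotropic_form_imp_even:
  assumes "odd z" and "even (anisotropic_form \<delta> z x y)"
  shows "\<delta> \<in> {1, 2} \<Longrightarrow> even x" and "\<delta> = 2 \<Longrightarrow> even y"
  using assms by (auto simp: anisotropic_form_def)

theorem lemma2p1:
  fixes n \<nu> \<delta> :: nat and z :: int and a :: "nat \<Rightarrow> int"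
  assumes "n \<ge> 1" and "\<nu> \<ge> 1" and "\<delta> \<in> {0, 1, 2}"
    and "z \<in> units_Z n"
    and "a \<in> Vset n (2*\<nu>+\<delta>)"
    and "cls n (2*\<nu>+\<delta>) a \<in> orth_vertices n \<nu> \<delta> z"
  shows "\<exists>i\<in>{1..2*\<nu>}. a i \<in> units_Z n"
proof (rule ccontr)
  assume no_unit: "\<not> (\<exists>i\<in>{1..2*\<nu>}. a i \<in> units_Z n)"
  obtain a' where a': "a' \<in> Vset n (2*\<nu>+\<delta>)" "bform n \<nu> \<delta> z a' a' = 0"
      "cls n (2*\<nu>+\<delta>) a = cls n (2*\<nu>+\<delta>) a'"
    using assms(6) unfolding orth_vertices_def by blast
  obtain l where l: "a' = scale n l a" using cls_eq_imp_scale[OF assms(1,5) a'(3)] .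
  have even_hyperbolic: "even (a' i)" if "i \<in> {1..2*\<nu>}" for i
  proof -
    have "a i \<in> {0..<2^n}" using assms(5) that by (auto simp: Vset_def tuples_def)
    then have "even (a i)" using no_unit that assms(1) by (auto simp: units_Z_def unit_mod_pow2_iff_odd)
    then show ?thesis unfolding l by (rule even_scale[OF assms(1)])
  qed
  have \<delta>_le: "\<delta> \<le> 2" using assms(3) by auto
  have "even (\<Sum>i\<in>{1..2*\<nu>+\<delta>}. \<Sum>j\<in>{1..2*\<nu>+\<delta>}. a' i * Gmat \<nu> \<delta> z i j * a' j)"
    using a'(2) assms(1) even_mod_pow2_iff unfolding bform_def by fastforce
  moreover have "even (\<Sum>i\<in>{1..\<nu>}. a' i * a' (i+\<nu>))" by (intro dvd_sum) (simp add: even_hyperbolic)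
  ultimately have "even (anisotropic_form \<delta> z (a' (2*\<nu>+1)) (a' (2*\<nu>+2)))"
    unfolding Gmat_quadratic_form[OF \<delta>_le] by simp
  note even_anisotropic = even_anisotropic_form_imp_even[OF units_Z_imp_odd[OF assms(1,4)] this]
  obtain k where "k \<in> {1..2*\<nu>+\<delta>}" "odd (a' k)" using Vset_has_odd_coordinate[OF assms(1) a'(1)] .
  then show False using even_hyperbolic even_anisotropic assms(3)
    by (cases "k \<le> 2*\<nu>") (auto simp: le_Suc_eq)
qed

end
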